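(* Let $x\in J$ and let $\mathcal I=\{I_i\}_{i\in F}$ and $\mathcal L=\{L_j\}_{j\in G}$ be $x$-norming partitions. Then there exists an $x$-norming partition $\mathcal N=\{N_p\}_{p\in H}$ such that (1) $\mathcal N\subset\mathcal I\cup\mathcal L$; (2) for every $i\in F$ there is a subinterval $H_i$ of $H$ with $I_i\cap\mathrm{supp}(x)=\bigcup_{p\in H_i}(N_p\cap\mathrm{supp}(x))$, and for every $j\in G$ there is a subinterval $H'_j$ of $H$ with $L_j\cap\mathrm{supp}(x)=\bigcup_{p\in H'_j}(N_p\cap\mathrm{supp}(x))$.
   Context: For a real sequence $x=(x(n))_{n\in\mathbb N}$ let $\|x\|_J=\sup\bigl(\sum_{i=1}^n|\sum_{k\in I_i}x(k)|^2\bigr)^{1/2}$ over all $n$ and all families of pairwise disjoint intervals $I_1,\dots,I_n$ of $\mathbb N$ (intervals: nonempty sets of consecutive positive integers, possibly infinite). $J=\{x:\|x\|_J<\infty\}$; for $x\in J$ and any interval $I$ the series $\sum_{k\in I}x(k)$ converges. $\mathrm{supp}(x)=\{n:x(n)\ne0\}$. A family of intervals $\mathcal I=\{I_i\}_{i\in F}$: $F=\{1,\dots,k\}$ or $F=\mathbb N$, each $I_i$ an interval, $\max I_i<\min I_{i+1}$ whenever $i+1\in F$; $\|x\|_{\mathcal I}=(\sum_{i\in F}|\sum_{k\in I_i}x(k)|^2)^{1/2}$; it is $x$-norming if $\|x\|_{\mathcal I}=\|x\|_J$. For nonempty $L\subset\mathbb N$, $\sup L=\max L$ if finite and $\infty$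 otherwise. An $x$-norming partition is an $x$-norming family with $\{\min I_i,\max I_i\}\subset\mathrm{supp}(x)$ for all $i<\sup F$, and, if $F$ is finite, $\min I_i\in\mathrm{supp}(x)$ and $\sup I_i=\sup\mathrm{supp}(x)$ for $i=\sup F$. *)

theory Defs
  imports Complex_Main "HOL-Library.Extended_Nat"
begin

text \<open>Sequences are functions nat => real; only indices n >= 1 matter
  (the natural numbers of the paper are the positive integers).\<close>

definition supp :: "(nat \<Rightarrow> real) \<Rightarrow> nat set" where
  "supp x = {n. 1 \<le> n \<and> x n \<noteq> 0}"

definition interval :: "nat set \<Rightarrow> bool" where
  "interval I \<longleftrightarrow> I \<noteq> {} \<and> I \<subseteq> {1..} \<and>
     (\<forall>a b c. a \<in> I \<longrightarrow> c \<in> I \<longrightarrow> a \<le> b \<longrightarrow> b \<le> c \<longrightarrow> b \<in> I)"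

definition isum :: "(nat \<Rightarrow> real) \<Rightarrow> nat set \<Rightarrow> real" where
  "isum x I = (if finite I then sum x I else (\<Sum>k. if k \<in> I then x k else 0))"

definition jvals :: "(nat \<Rightarrow> real) \<Rightarrow> real set" where
  "jvals x = {sqrt (\<Sum>i<n. \<bar>isum x (I i)\<bar>^2) | (n::nat) (I::nat \<Rightarrow> nat set).
      (\<forall>i<n. interval (I i)) \<and> (\<forall>i<n. \<forall>j<n. i \<noteq> j \<longrightarrow> I i \<inter> I j = {})}"

definition in_J :: "(nat \<Rightarrow> real) \<Rightarrow> bool" where
  "in_J x \<longleftrightarrow> bdd_above (jvals x)"

definition jnorm :: "(nat \<Rightarrow> real) \<Rightarrow> real" where
  "jnorm x = Sup (jvals x)"

definition supE :: "nat set \<Rightarrow> enat" where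
  "supE L = (if finite L then enat (Max L) else \<infinity>)"

definition interval_family :: "nat set \<Rightarrow> (nat \<Rightarrow> nat set) \<Rightarrow> bool" where
  "interval_family F I \<longleftrightarrow>
     ((\<exists>k. F = {1..k}) \<or> F = {1..}) \<and>
     (\<forall>i\<in>F. interval (I i)) \<and>
     (\<forall>i. i \<in> F \<longrightarrow> Suc i \<in> F \<longrightarrow> (\<forall>a\<in>I i. \<forall>b\<in>I (Suc i). a < b))"

definition fam_norm :: "(nat \<Rightarrow> real) \<Rightarrow> nat set \<Rightarrow> (nat \<Rightarrow> nat set) \<Rightarrow> real" where
  "fam_norm x F I = sqrt (if finite F then (\<Sum>i\<in>F. \<bar>isum x (I i)\<bar>^2)
                          else (\<Sum>i. if i \<in> F then \<bar>isum x (I i)\<bar>^2 else 0))"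

definition norming_family :: "(nat \<Rightarrow> real) \<Rightarrow> nat set \<Rightarrow> (nat \<Rightarrow> nat set) \<Rightarrow> bool" where
  "norming_family x F I \<longleftrightarrow> interval_family F I \<and> fam_norm x F I = jnorm x"

definition norming_partition :: "(nat \<Rightarrow> real) \<Rightarrow> nat set \<Rightarrow> (nat \<Rightarrow> nat set) \<Rightarrow> bool" where
  "norming_partition x F I \<longleftrightarrow> norming_family x F I \<and>
     (\<forall>i\<in>F. enat i < supE F \<longrightarrow>
        finite (I i) \<and> Min (I i) \<in> supp x \<and> Max (I i) \<in> supp x) \<and>
     (finite F \<longrightarrow> (\<forall>i\<in>F. i = Max F \<longrightarrow>
        Min (I i) \<in> supp x \<and> supE (I i) = supE (supp x)))"

end

(*
  Two norming partitions are laminar on the support of x.  Suppose a member I of one crosses a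
  member L of the other, with support points in I - L, I \<inter> L and L - I, and let A, B, C be the
  sums of x over these three intervals.  Refining a member of a norming family into disjoint
  intervals never increases the sum of squares; hence AB \<ge> 0 and BC \<ge> 0, and A, B, C are
  nonzero, since a piece with sum 0 could be cut after its first support point a into pieces
  with sums x a and - x a.  Exchanging I and L for I \<union> L and I \<inter> L in the two families formed
  by the head of one partition and the tail of the other gives
  (A + B + C)\<^sup>2 + B\<^sup>2 \<le> (A + B)\<^sup>2 + (B + C)\<^sup>2, i.e. AC \<le> 0, which is impossible.

  Hence the members of either partition that are minimal on the support are disjoint intervals
  covering supp x.  Listed by their first support points they form the partition N; every
  member of either partition is, on the support, a union of consecutive members of N, and the
  squares of the sums over N dominate the partial sums of squares of one of the two
  partitions, so N is norming as well.
*)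

theory Submission
  imports Defs "HOL-Library.Disjoint_Sets" "HOL-Library.Infinite_Set"
begin

lemma intervalI:
  assumes "K \<noteq> {}" "K \<subseteq> {1..}" "\<And>a b c. a \<in> K \<Longrightarrow> c \<in> K \<Longrightarrow> a \<le> b \<Longrightarrow> b \<le> c \<Longrightarrow> b \<in> K"
  shows "interval K"
  unfolding interval_def using assms by blast

lemma interval_between: "interval K \<Longrightarrow> a \<in> K \<Longrightarrow> c \<in> K \<Longrightarrow> a \<le> b \<Longrightarrow> b \<le> c \<Longrightarrow> b \<in> K"
  unfolding interval_def by blast

lemma interval_subset_atLeast1: "interval K \<Longrightarrow> K \<subseteq> {1..}"
  unfolding interval_def by blast

lemma interval_nonempty: "interval K \<Longrightarrow> K \<noteq> {}"
  unfolding interval_def by blast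

lemma interval_Int_convex:
  assumes "interval K" "K \<inter> C \<noteq> {}" "\<And>a b c. a \<in> C \<Longrightarrow> c \<in> C \<Longrightarrow> a \<le> b \<Longrightarrow> b \<le> c \<Longrightarrow> b \<in> C"
  shows "interval (K \<inter> C)"
proof (rule intervalI)
  show "K \<inter> C \<noteq> {}" by fact
  show "K \<inter> C \<subseteq> {1..}" using interval_subset_atLeast1[OF assms(1)] by blast
  fix a b c assume "a \<in> K \<inter> C" "c \<in> K \<inter> C" "a \<le> b" "b \<le> c"
  then show "b \<in> K \<inter> C" using interval_between[OF assms(1), of a c b] assms(3)[of a c b] by blast
qed

lemma interval_Int:
  assumes "interval K" "interval K'" "K \<inter> K' \<noteq> {}"
  shows "interval (K \<inter> K')"
  using interval_Int_convex[OF assms(1,3)] interval_between[OF assms(2)] by blast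

lemma interval_Un:
  assumes "interval K" "interval K'" "K \<inter> K' \<noteq> {}"
  shows "interval (K \<union> K')"
proof (rule intervalI)
  show "K \<union> K' \<noteq> {}" "K \<union> K' \<subseteq> {1..}"
    using assms interval_subset_atLeast1 by auto
  obtain w where w: "w \<in> K" "w \<in> K'" using assms(3) by blast
  fix a b c assume ac: "a \<in> K \<union> K'" "c \<in> K \<union> K'" and "a \<le> b" "b \<le> c"
  show "b \<in> K \<union> K'"
  proof (cases "b \<le> w")
    case True
    with ac(1) w \<open>a \<le> b\<close> show ?thesis
      using interval_between[OF assms(1), of a w b] interval_between[OF assms(2), of a w b] by blast
  next
    case False
    with ac(2) w \<open>b \<le> c\<close> show ?thesis
      using interval_between[OF assms(1), of w c b] interval_between[OF assms(2), of w c b] by auto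
  qed
qed

lemma interval_Diff:
  assumes "interval K" "K - K' \<noteq> {}"
    and "(\<forall>p\<in>K - K'. \<forall>q\<in>K'. p < q) \<or> (\<forall>p\<in>K - K'. \<forall>q\<in>K'. q < p)"
  shows "interval (K - K')"
proof (rule intervalI)
  show "K - K' \<noteq> {}" "K - K' \<subseteq> {1..}"
    using assms(2) interval_subset_atLeast1[OF assms(1)] by auto
  fix a b c assume abc: "a \<in> K - K'" "c \<in> K - K'" "a \<le> b" "b \<le> c"
  then have "b \<in> K" using interval_between[OF assms(1)] by blast
  moreover have "b \<notin> K'"
    using assms(3) abc by (meson le_less_trans leD order.strict_trans2)
  ultimately show "b \<in> K - K'" by blast
qed

lemma interval_infinite_upward:
  assumes "interval K" "infinite K" "a \<in> K" "a \<le> b"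
  shows "b \<in> K"
proof -
  obtain c where "c \<in> K" "b \<le> c"
    using \<open>infinite K\<close> unfolding infinite_nat_iff_unbounded_le by blast
  then show ?thesis using interval_between assms by blast
qed

lemma intervals_disjoint_less:
  assumes "interval K" "interval K'" "K \<inter> K' = {}" "a \<in> K" "b \<in> K'" "a < b" "u \<in> K" "v \<in> K'"
  shows "u < v"
proof (rule ccontr)
  assume "\<not> u < v"
  show False
  proof (cases "v \<le> a")
    case True
    then have "a \<in> K'" using interval_between[OF assms(2) assms(8) assms(5)] \<open>a < b\<close> by simp
    with assms(3,4) show False by blast
  next
    case False
    then have "v \<in> K" using interval_between[OF assms(1) assms(4) assms(7)] \<open>\<not> u < v\<close> by simp
    with assms(3,8) show False by blast
  qed
qed

lemma interval_singleton: "1 \<le> n \<Longrightarrow> interval {n}"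
  unfolding interval_def by auto

lemma interval_atLeastLessThan: "1 \<le> a \<Longrightarrow> a < b \<Longrightarrow> interval {a..<b}"
  unfolding interval_def by auto

lemma disjoint_if_less:
  assumes "\<And>p q. p \<in> A \<Longrightarrow> q \<in> B \<Longrightarrow> p < (q::nat)"
  shows "A \<inter> B = {}"
proof (rule equals0I)
  fix p assume "p \<in> A \<inter> B"
  then have "p < p" using assms by blast
  then show False by simp
qed

lemma disjoint_family_on_fun_upd:
  assumes "disjoint_family_on A S" "\<forall>k\<in>S - {i}. A k \<inter> X = {}"
  shows "disjoint_family_on (A(i := X)) S"
  unfolding disjoint_family_on_def
proof (intro ballI impI)
  fix k k' assume "k \<in> S" "k' \<in> S" "k \<noteq> k'"
  show "(A(i := X)) k \<inter> (A(i := X)) k' = {}"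
  proof (cases "k = i \<or> k' = i")
    case True
    with assms(2) \<open>k \<in> S\<close> \<open>k' \<in> S\<close> \<open>k \<noteq> k'\<close> show ?thesis by (auto simp: Int_commute)
  next
    case False
    with disjoint_family_onD[OF assms(1)] \<open>k \<in> S\<close> \<open>k' \<in> S\<close> \<open>k \<noteq> k'\<close> show ?thesis by simp
  qed
qed

lemma isum_eq_suminf: "isum x K = (\<Sum>k. if k \<in> K then x k else 0)"
proof (cases "finite K")
  case True
  then have "(\<Sum>k. if k \<in> K then x k else 0) = (\<Sum>k\<in>K. if k \<in> K then x k else 0)"
    by (intro suminf_finite) auto
  with True show ?thesis by (simp add: isum_def)
qed (simp add: isum_def)

lemma isum_singleton [simp]: "isum x {n} = x n"
  by (simp add: isum_def)

lemma isum_cong_supp: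
  assumes "K \<subseteq> {1..}" "K' \<subseteq> {1..}" "K \<inter> supp x = K' \<inter> supp x"
  shows "isum x K = isum x K'"
proof -
  have "(if k \<in> K then x k else 0) = (if k \<in> K' then x k else 0)" for k
    using assms by (auto simp: supp_def set_eq_iff subset_iff)
  then show ?thesis by (simp add: isum_eq_suminf)
qed

lemma sum_sq_isum_le_jnorm:
  assumes "in_J x" "finite S" "\<forall>s\<in>S. interval (K s)" "disjoint_family_on K S"
  shows "(\<Sum>s\<in>S. (isum x (K s))\<^sup>2) \<le> (jnorm x)\<^sup>2"
proof -
  obtain h where h: "bij_betw h {..<card S} S"
    using ex_bij_betw_nat_finite[OF assms(2)] by (auto simp: atLeast0LessThan)
  have "(\<Sum>s\<in>S. (isum x (K s))\<^sup>2) = (\<Sum>i<card S. \<bar>isum x (K (h i))\<bar>^2)"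
    using sum.reindex_bij_betw[OF h, of "\<lambda>s. (isum x (K s))\<^sup>2"] by simp
  moreover have "sqrt (\<Sum>i<card S. \<bar>isum x (K (h i))\<bar>^2) \<in> jvals x"
    unfolding jvals_def
  proof (intro CollectI exI conjI allI impI)
    fix i j assume "i < card S" "j < card S"
    then have "h i \<in> S" "h j \<in> S" using bij_betwE[OF h] by auto
    with assms(3) show "interval (K (h i))" by blast
    assume "i \<noteq> j"
    then have "h i \<noteq> h j" using bij_betw_imp_inj_on[OF h] \<open>i < card S\<close> \<open>j < card S\<close> by (auto dest: inj_onD)
    with \<open>h i \<in> S\<close> \<open>h j \<in> S\<close> assms(4) show "K (h i) \<inter> K (h j) = {}"
      by (auto dest: disjoint_family_onD)
  qed (rule refl)
  then have "sqrt (\<Sum>i<card S. \<bar>isum x (K (h i))\<bar>^2) \<le> jnorm x"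
    using assms(1) cSup_upper unfolding in_J_def jnorm_def by blast
  ultimately show ?thesis by (simp add: sqrt_le_D)
qed

lemma jnorm_nonneg:
  assumes "in_J x"
  shows "0 \<le> jnorm x"
proof -
  have "0 \<in> jvals x"
    unfolding jvals_def by (rule CollectI, rule exI[of _ 0], rule exI[of _ "\<lambda>_. {}"]) simp
  with assms show ?thesis
    unfolding in_J_def jnorm_def by (rule cSup_upper[rotated])
qed

lemma sum_sq_isum_Plus_le_jnorm:
  assumes "in_J x" "finite S" "finite T" "\<forall>s\<in>S. interval (A s)" "\<forall>t\<in>T. interval (B t)"
    and "disjoint_family_on A S" "disjoint_family_on B T" "\<forall>s\<in>S. \<forall>t\<in>T. A s \<inter> B t = {}"
  shows "(\<Sum>s\<in>S. (isum x (A s))\<^sup>2) + (\<Sum>t\<in>T. (isum x (B t))\<^sup>2) \<le> (jnorm x)\<^sup>2"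
proof -
  have "disjoint_family_on (case_sum A B) (S <+> T)"
    unfolding disjoint_family_on_def
  proof (intro ballI impI)
    fix r r' assume rr': "r \<in> S <+> T" "r' \<in> S <+> T" "r \<noteq> r'"
    show "case_sum A B r \<inter> case_sum A B r' = {}"
    proof (cases r; cases r')
      fix s s' assume "r = Inl s" "r' = Inl s'"
      with rr' assms(6) show ?thesis by (auto dest: disjoint_family_onD)
    next
      fix s t assume "r = Inl s" "r' = Inr t"
      with rr' assms(8) show ?thesis by auto
    next
      fix t s assume "r = Inr t" "r' = Inl s"
      with rr' assms(8) show ?thesis by (auto simp: Int_commute)
    next
      fix t t' assume "r = Inr t" "r' = Inr t'"
      with rr' assms(7) show ?thesis by (auto dest: disjoint_family_onD)
    qed
  qed
  moreover have "\<forall>r\<in>S <+> T. interval (case_sum A B r)"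
    using assms(4,5) by auto
  ultimately have "(\<Sum>r\<in>S <+> T. (isum x (case_sum A B r))\<^sup>2) \<le> (jnorm x)\<^sup>2"
    using sum_sq_isum_le_jnorm[OF assms(1) finite_Plus[OF assms(2,3)]] by blast
  then show ?thesis
    unfolding sum.Plus[OF assms(2,3)] comp_def by simp
qed

lemma disjoint_blocks_if_not_Cauchy:
  fixes k :: nat
  assumes "0 < e" "\<forall>N. \<exists>m\<ge>N. \<exists>n. e \<le> \<bar>sum x {m..<n}\<bar>"
  shows "\<exists>K M. (\<forall>i<k. interval (K i) \<and> K i \<subseteq> {..<M} \<and> e \<le> \<bar>isum x (K i)\<bar>)
    \<and> disjoint_family_on K {..<k}"
proof (induction k)
  case 0
  show ?case by (auto simp: disjoint_family_on_def)
next
  case (Suc k)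
  then obtain K M where K: "\<forall>i<k. interval (K i) \<and> K i \<subseteq> {..<M} \<and> e \<le> \<bar>isum x (K i)\<bar>"
    and dK: "disjoint_family_on K {..<k}" by blast
  obtain m n where mn: "max M 1 \<le> m" "e \<le> \<bar>sum x {m..<n}\<bar>"
    using assms(2) by blast
  then have "m < n" using assms(1) by (cases "m < n") auto
  let ?K = "K(k := {m..<n})"
  have "interval (?K i) \<and> ?K i \<subseteq> {..<max M n} \<and> e \<le> \<bar>isum x (?K i)\<bar>" if "i < Suc k" for i
  proof (cases "i = k")
    case True
    then show ?thesis using mn \<open>m < n\<close> by (auto simp: interval_atLeastLessThan isum_def)
  next
    case False
    with that K have "interval (K i)" "K i \<subseteq> {..<M}" "e \<le> \<bar>isum x (K i)\<bar>" by auto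
    with False show ?thesis by auto
  qed
  moreover have "disjoint_family_on ?K {..<Suc k}"
    unfolding disjoint_family_on_def
  proof (intro ballI impI)
    have far: "K l \<inter> {m..<n} = {}" if "l < k" for l
    proof -
      have "K l \<subseteq> {..<M}" using K that by blast
      with mn(1) show ?thesis by auto
    qed
    fix i j assume "i \<in> {..<Suc k}" "j \<in> {..<Suc k}" "i \<noteq> j"
    then consider "i < k" "j < k" | "i = k" "j < k" | "i < k" "j = k" by fastforce
    then show "?K i \<inter> ?K j = {}"
    proof cases
      case 1 with dK \<open>i \<noteq> j\<close> show ?thesis by (simp add: disjoint_family_onD)
    next
      case 2 with far[of j] show ?thesis by (simp add: Int_commute)
    next
      case 3 with far[of i] show ?thesis by simp
    qed
  qed
  ultimately show ?case by blast
qed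

lemma summable_if_in_J:
  assumes "in_J x"
  shows "summable x"
proof (rule ccontr)
  assume "\<not> summable x"
  then obtain e where e: "0 < e" "\<forall>N. \<exists>m\<ge>N. \<exists>n. e \<le> \<bar>sum x {m..<n}\<bar>"
    unfolding summable_Cauchy by (auto simp: not_less)
  obtain k :: nat where k: "(jnorm x)\<^sup>2 / e\<^sup>2 < k"
    using reals_Archimedean2 by blast
  obtain K where K: "\<forall>i<k. interval (K i) \<and> e \<le> \<bar>isum x (K i)\<bar>" "disjoint_family_on K {..<k}"
    using disjoint_blocks_if_not_Cauchy[OF e] by blast
  have "k * e\<^sup>2 = (\<Sum>i<k. e\<^sup>2)" by simp
  also have "\<dots> \<le> (\<Sum>i<k. (isum x (K i))\<^sup>2)"
    using K(1) e(1) by (intro sum_mono) (simp add: abs_le_square_iff[symmetric])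
  also have "\<dots> \<le> (jnorm x)\<^sup>2"
    using sum_sq_isum_le_jnorm[OF assms _ _ K(2)] K(1) by simp
  finally show False using k e(1) by (simp add: divide_less_eq)
qed

lemma summable_restrict:
  assumes "in_J x" "interval K"
  shows "summable (\<lambda>k. if k \<in> K then x k else 0)"
proof (cases "finite K")
  case True
  then show ?thesis by (intro summable_finite[of K]) auto
next
  case False
  obtain a where "a \<in> K" using False by fastforce
  then have "(\<lambda>k. if k \<in> K then x k else 0) = (\<lambda>k. x k - (if k < a \<and> k \<notin> K then x k else 0))"
    using interval_infinite_upward[OF assms(2) False] by (force simp: fun_eq_iff not_less)
  moreover have "summable (\<lambda>k. if k < a \<and> k \<notin> K then x k else 0)"
    by (intro summable_finite[of "{..<a}"]) auto
  ultimately show ?thesis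
    using summable_diff[OF summable_if_in_J[OF assms(1)]] by simp
qed

lemma isum_Un:
  assumes "in_J x" "interval U" "interval V" "U \<inter> V = {}"
  shows "isum x (U \<union> V) = isum x U + isum x V"
proof -
  have "(\<lambda>k. if k \<in> U \<union> V then x k else 0) = (\<lambda>k. (if k \<in> U then x k else 0) + (if k \<in> V then x k else 0))"
    using assms(4) by (auto simp: fun_eq_iff)
  then show ?thesis
    using suminf_add[OF summable_restrict[OF assms(1,2)] summable_restrict[OF assms(1,3)]]
    by (simp add: isum_eq_suminf)
qed

lemma interval_family_index: "interval_family F I \<Longrightarrow> (\<exists>k. F = {1..k}) \<or> F = {1..}"
  unfolding interval_family_def by blast

lemma interval_family_interval: "interval_family F I \<Longrightarrow> i \<in> F \<Longrightarrow> interval (I i)"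
  unfolding interval_family_def by blast

lemma interval_family_index_between:
  assumes "interval_family F I" "i \<in> F" "k \<in> F" "i \<le> j" "j \<le> k"
  shows "j \<in> F"
  using interval_family_index[OF assms(1)] assms(2-5) by auto

lemma interval_family_Suc:
  assumes "interval_family F I" "i \<in> F" "enat i < supE F"
  shows "Suc i \<in> F"
proof (cases "finite F")
  case True
  then have "i < Max F" using assms(3) by (simp add: supE_def)
  then show ?thesis
    using interval_family_index_between[OF assms(1,2) Max_in[OF True], of "Suc i"] assms(2) by auto
next
  case False
  then show ?thesis using interval_family_index[OF assms(1)] by auto
qed

lemma interval_family_less:
  assumes fam: "interval_family F I" and "i \<in> F" "j \<in> F" "i < j" "a \<in> I i" "b \<in> I j"
  shows "a < b"
  using assms(3-6)
proof (induction j arbitrary: b)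
  case 0
  then show ?case by simp
next
  case (Suc j)
  show ?case
  proof (cases "i = j")
    case True
    with fam \<open>i \<in> F\<close> Suc.prems show ?thesis unfolding interval_family_def by blast
  next
    case False
    then have "i < j" using Suc.prems by simp
    then have "j \<in> F" using interval_family_index_between[OF fam \<open>i \<in> F\<close> Suc.prems(1)] by simp
    obtain c where "c \<in> I j" using interval_nonempty[OF interval_family_interval[OF fam \<open>j \<in> F\<close>]] by blast
    have "a < c" using Suc.IH[OF \<open>j \<in> F\<close> \<open>i < j\<close> \<open>a \<in> I i\<close> \<open>c \<in> I j\<close>] .
    also have "c < b" using fam \<open>j \<in> F\<close> Suc.prems \<open>c \<in> I j\<close> unfolding interval_family_def by blast
    finally show ?thesis .
  qed
qed

lemma interval_family_disjoint:
  assumes "interval_family F I"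
  shows "disjoint_family_on I F"
  unfolding disjoint_family_on_def
proof (intro ballI impI)
  fix i j assume "i \<in> F" "j \<in> F" "i \<noteq> j"
  then consider "i < j" | "j < i" by linarith
  then show "I i \<inter> I j = {}"
  proof cases
    case 1
    then show ?thesis
      using interval_family_less[OF assms \<open>i \<in> F\<close> \<open>j \<in> F\<close>] by (intro disjoint_if_less)
  next
    case 2
    then have "I j \<inter> I i = {}"
      using interval_family_less[OF assms \<open>j \<in> F\<close> \<open>i \<in> F\<close>] by (intro disjoint_if_less)
    then show ?thesis by blast
  qed
qed

definition partial_norm :: "(nat \<Rightarrow> real) \<Rightarrow> nat set \<Rightarrow> (nat \<Rightarrow> nat set) \<Rightarrow> nat \<Rightarrow> real" where
  "partial_norm x F I m = (\<Sum>i\<in>F \<inter> {..m}. (isum x (I i))\<^sup>2)"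

lemma partial_norm_le_jnorm:
  assumes "in_J x" "interval_family F I"
  shows "partial_norm x F I m \<le> (jnorm x)\<^sup>2"
  unfolding partial_norm_def
proof (rule sum_sq_isum_le_jnorm[OF assms(1)])
  show "\<forall>i\<in>F \<inter> {..m}. interval (I i)" using interval_family_interval[OF assms(2)] by blast
  show "disjoint_family_on I (F \<inter> {..m})"
    by (rule disjoint_family_on_mono[OF _ interval_family_disjoint[OF assms(2)]]) blast
qed simp

lemma partial_norm_eq_sum:
  "partial_norm x F I m = (\<Sum>i\<le>m. if i \<in> F then (isum x (I i))\<^sup>2 else 0)"
  unfolding partial_norm_def Int_commute[of F] by (rule sum.inter_restrict) simp

lemma fam_norm_eq_sqrt_suminf:
  "fam_norm x F I = sqrt (\<Sum>i. if i \<in> F then (isum x (I i))\<^sup>2 else 0)"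
proof (cases "finite F")
  case True
  then have "(\<Sum>i. if i \<in> F then (isum x (I i))\<^sup>2 else 0) = (\<Sum>i\<in>F. (isum x (I i))\<^sup>2)"
    by (subst suminf_finite[of F]) auto
  with True show ?thesis by (simp add: fam_norm_def)
next
  case False
  have "(\<lambda>i. if i \<in> F then \<bar>isum x (I i)\<bar>^2 else 0) = (\<lambda>i. if i \<in> F then (isum x (I i))\<^sup>2 else 0)"
    by (simp only: power2_abs)
  with False show ?thesis by (simp add: fam_norm_def)
qed

lemma summable_sq_isum:
  assumes "in_J x" "interval_family F I"
  shows "summable (\<lambda>i. if i \<in> F then (isum x (I i))\<^sup>2 else 0)"
  by (rule bounded_imp_summable[where B = "(jnorm x)\<^sup>2"])
    (simp_all add: partial_norm_eq_sum[symmetric] partial_norm_le_jnorm[OF assms])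

lemma fam_norm_sq:
  assumes "in_J x" "interval_family F I"
  shows "(fam_norm x F I)\<^sup>2 = (\<Sum>i. if i \<in> F then (isum x (I i))\<^sup>2 else 0)"
  using suminf_nonneg[OF summable_sq_isum[OF assms]] by (simp add: fam_norm_eq_sqrt_suminf)

lemma partial_norm_tendsto:
  assumes "in_J x" "interval_family F I"
  shows "partial_norm x F I \<longlonglongrightarrow> (fam_norm x F I)\<^sup>2"
  using summable_LIMSEQ'[OF summable_sq_isum[OF assms]]
  by (simp add: fam_norm_sq[OF assms] partial_norm_eq_sum[abs_def])

lemma partial_norm_le_fam_norm:
  assumes "in_J x" "interval_family F I"
  shows "partial_norm x F I m \<le> (fam_norm x F I)\<^sup>2"
  unfolding partial_norm_eq_sum fam_norm_sq[OF assms]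
  by (rule sum_le_suminf[OF summable_sq_isum[OF assms]]) auto

lemma norming_familyD:
  "norming_family x F I \<Longrightarrow> interval_family F I"
  "norming_family x F I \<Longrightarrow> fam_norm x F I = jnorm x"
  unfolding norming_family_def by auto

lemma norming_familyI_dominating:
  assumes J: "in_J x" and fam: "interval_family H N" and nF: "norming_family x F I"
    and dom: "\<forall>m. \<exists>m'. partial_norm x F I m \<le> partial_norm x H N m'"
  shows "norming_family x H N"
proof -
  have "partial_norm x F I m \<le> (fam_norm x H N)\<^sup>2" for m
    using dom partial_norm_le_fam_norm[OF J fam] order_trans by blast
  then have "(jnorm x)\<^sup>2 \<le> (fam_norm x H N)\<^sup>2"
    using partial_norm_tendsto[OF J norming_familyD(1)[OF nF]] norming_familyD(2)[OF nF]
    by (intro LIMSEQ_le_const2[where X = "partial_norm x F I"]) auto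
  moreover have "(fam_norm x H N)\<^sup>2 \<le> (jnorm x)\<^sup>2"
    using partial_norm_le_jnorm[OF J fam]
    by (intro LIMSEQ_le_const2[OF partial_norm_tendsto[OF J fam]]) auto
  moreover have "0 \<le> fam_norm x H N"
    using suminf_nonneg[OF summable_sq_isum[OF J fam]] by (simp add: fam_norm_eq_sqrt_suminf)
  ultimately show ?thesis
    using fam jnorm_nonneg[OF J] by (simp add: norming_family_def power2_eq_iff_nonneg)
qed

section \<open>Exchange arguments\<close>

lemma norming_family_exchange:
  assumes J: "in_J x" and nF: "norming_family x F I" and R: "finite R" "R \<subseteq> F"
    and E: "finite S" "\<forall>s\<in>S. interval (E s)" "disjoint_family_on E S"
    and apart: "\<forall>i\<in>F - R. \<forall>s\<in>S. I i \<inter> E s = {}"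
  shows "(\<Sum>s\<in>S. (isum x (E s))\<^sup>2) \<le> (\<Sum>i\<in>R. (isum x (I i))\<^sup>2)"
proof -
  let ?c = "(\<Sum>s\<in>S. (isum x (E s))\<^sup>2) - (\<Sum>i\<in>R. (isum x (I i))\<^sup>2)"
  have fam: "interval_family F I" using norming_familyD(1)[OF nF] .
  obtain M where M: "R \<subseteq> {..M}" using R(1) finite_nat_iff_bounded_le by blast
  have "partial_norm x F I m + ?c \<le> (jnorm x)\<^sup>2" if "M \<le> m" for m
  proof -
    let ?A = "F \<inter> {..m} - R"
    have "(\<Sum>i\<in>?A. (isum x (I i))\<^sup>2) + (\<Sum>s\<in>S. (isum x (E s))\<^sup>2) \<le> (jnorm x)\<^sup>2"
    proof (rule sum_sq_isum_Plus_le_jnorm[OF J _ E(1) _ E(2) _ E(3)])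
      show "\<forall>i\<in>?A. interval (I i)" using interval_family_interval[OF fam] by blast
      show "disjoint_family_on I ?A"
        by (rule disjoint_family_on_mono[OF _ interval_family_disjoint[OF fam]]) blast
      show "\<forall>i\<in>?A. \<forall>s\<in>S. I i \<inter> E s = {}" using apart by blast
    qed simp
    moreover have "(\<Sum>i\<in>?A. (isum x (I i))\<^sup>2) = partial_norm x F I m - (\<Sum>i\<in>R. (isum x (I i))\<^sup>2)"
      unfolding partial_norm_def using M that R(2) by (intro sum_diff) auto
    ultimately show ?thesis by simp
  qed
  moreover have "(\<lambda>m. partial_norm x F I m + ?c) \<longlonglongrightarrow> (jnorm x)\<^sup>2 + ?c"
    using partial_norm_tendsto[OF J fam] norming_familyD(2)[OF nF] by (auto intro: tendsto_add)
  ultimately have "(jnorm x)\<^sup>2 + ?c \<le> (jnorm x)\<^sup>2"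
    by (intro LIMSEQ_le_const2[where X = "\<lambda>m. partial_norm x F I m + ?c"]) auto
  then show ?thesis by simp
qed

lemma norming_family_covers_supp:
  assumes J: "in_J x" and nF: "norming_family x F I" and n: "n \<in> supp x"
  shows "\<exists>i\<in>F. n \<in> I i"
proof (rule ccontr)
  assume "\<not> (\<exists>i\<in>F. n \<in> I i)"
  then have "(\<Sum>s\<in>{n}. (isum x {s})\<^sup>2) \<le> (\<Sum>i\<in>{}. (isum x (I i))\<^sup>2)"
    using n by (intro norming_family_exchange[OF J nF]) (auto simp: supp_def interval_singleton disjoint_family_on_def)
  then show False using n by (simp add: supp_def)
qed

lemma norming_member_refinement:
  assumes J: "in_J x" and nF: "norming_family x F I" and i: "i \<in> F"
    and E: "finite S" "\<forall>s\<in>S. interval (E s)" "disjoint_family_on E S" "\<forall>s\<in>S. E s \<subseteq> I i"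
  shows "(\<Sum>s\<in>S. (isum x (E s))\<^sup>2) \<le> (isum x (I i))\<^sup>2"
proof -
  have "\<forall>k\<in>F - {i}. I k \<inter> I i = {}"
    using interval_family_disjoint[OF norming_familyD(1)[OF nF]] i by (auto dest: disjoint_family_onD)
  then have "\<forall>k\<in>F - {i}. \<forall>s\<in>S. I k \<inter> E s = {}" using E(4) by blast
  from norming_family_exchange[OF J nF _ _ E(1-3) this] i show ?thesis by simp
qed

lemma norming_member_split:
  assumes J: "in_J x" and nF: "norming_family x F I" and i: "i \<in> F"
    and UV: "I i = U \<union> V" "U \<inter> V = {}" "interval U" "interval V"
  shows "0 \<le> isum x U * isum x V"
proof -
  let ?E = "\<lambda>b. if b then U else V"
  have "disjoint_family_on ?E {True, False}"
    using UV(2) by (auto simp: disjoint_family_on_def Int_commute)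
  then have "(\<Sum>b\<in>{True, False}. (isum x (?E b))\<^sup>2) \<le> (isum x (I i))\<^sup>2"
    using UV by (intro norming_member_refinement[OF J nF i]) auto
  moreover have "isum x (I i) = isum x U + isum x V"
    using isum_Un[OF J] UV by simp
  ultimately show ?thesis by (simp add: power2_sum)
qed

lemma norming_member_piece_nonzero:
  assumes J: "in_J x" and nF: "norming_family x F I" and i: "i \<in> F"
    and UV: "I i = U \<union> V" "U \<inter> V = {}" "interval U" "interval V" and u: "u \<in> U" "u \<in> supp x"
  shows "isum x U \<noteq> 0"
proof
  assume U0: "isum x U = 0"
  define a where "a = (LEAST n. n \<in> U \<inter> supp x)"
  have a: "a \<in> U" "a \<in> supp x"
    using LeastI[of "\<lambda>n. n \<in> U \<inter> supp x" u] u unfolding a_def by auto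
  have a_least: "a \<le> n" if "n \<in> U" "n \<in> supp x" for n
    using that unfolding a_def by (simp add: Least_le)
  define U1 U2 where "U1 = U \<inter> {..a}" and "U2 = U \<inter> {a<..}"
  have U: "U = U1 \<union> U2" "U1 \<inter> U2 = {}" by (auto simp: U1_def U2_def)
  have U1: "interval U1"
    unfolding U1_def using a by (intro interval_Int_convex[OF UV(3)]) auto
  have "U1 \<inter> supp x = {a} \<inter> supp x"
  proof (intro equalityI subsetI)
    fix n assume "n \<in> U1 \<inter> supp x"
    then have "n \<le> a" "a \<le> n" using a_least by (auto simp: U1_def)
    then show "n \<in> {a} \<inter> supp x" using \<open>n \<in> U1 \<inter> supp x\<close> by simp
  qed (use a in \<open>auto simp: U1_def\<close>)
  then have "isum x U1 = x a"
    using interval_subset_atLeast1[OF U1] interval_subset_atLeast1[OF UV(3)] a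
    by (subst isum_cong_supp[of U1 "{a}"]) auto
  moreover have "x a \<noteq> 0" using a by (simp add: supp_def)
  ultimately have "U2 \<noteq> {}" using U U0 by auto
  then have U2: "interval U2"
    unfolding U2_def by (intro interval_Int_convex[OF UV(3)]) auto
  have "isum x U2 = - x a"
    using isum_Un[OF J, of U1 U2] U U1 U2 U0 \<open>isum x U1 = x a\<close> by simp
  let ?E = "(!) [U1, U2, V]"
  have "disjoint_family_on ?E {..<3}"
    unfolding disjoint_family_on_def
    by (auto simp: numeral_3_eq_3 less_Suc_eq) (use U UV(2) in blast)+
  moreover have "\<forall>k\<in>{..<3}. interval (?E k) \<and> ?E k \<subseteq> I i"
    using U1 U2 UV U by (auto simp: numeral_3_eq_3 less_Suc_eq)
  ultimately have "(\<Sum>k<3. (isum x (?E k))\<^sup>2) \<le> (isum x (I i))\<^sup>2"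
    by (intro norming_member_refinement[OF J nF i]) auto
  moreover have "isum x (I i) = isum x V"
    using isum_Un[OF J, of U V] UV U0 by simp
  ultimately have "(x a)\<^sup>2 + (x a)\<^sup>2 \<le> 0"
    using \<open>isum x U1 = x a\<close> \<open>isum x U2 = - x a\<close> by (simp add: numeral_3_eq_3)
  with \<open>x a \<noteq> 0\<close> show False by (simp add: add_nonneg_eq_0_iff)
qed

lemma sum_fun_upd_atMost:
  fixes i :: nat
  assumes "i \<in> F"
  shows "(\<Sum>k\<in>F \<inter> {..i}. g ((I(i := X)) k)) = (\<Sum>k\<in>F \<inter> {..<i}. g (I k)) + g X"
proof -
  have "F \<inter> {..i} = insert i (F \<inter> {..<i})" using assms by (auto simp: le_less)
  moreover have "(\<Sum>k\<in>F \<inter> {..<i}. g ((I(i := X)) k)) = (\<Sum>k\<in>F \<inter> {..<i}. g (I k))"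
    by (rule sum.cong) auto
  ultimately show ?thesis by (simp add: add.commute)
qed

lemma partial_norm_split:
  fixes i :: nat
  assumes "i \<in> F" "i \<le> m"
  shows "partial_norm x F I m
    = (\<Sum>k\<in>F \<inter> {..<i}. (isum x (I k))\<^sup>2) + (isum x (I i))\<^sup>2 + (\<Sum>k\<in>F \<inter> {i<..m}. (isum x (I k))\<^sup>2)"
proof -
  have "F \<inter> {..m} = insert i ((F \<inter> {..<i}) \<union> (F \<inter> {i<..m}))" using assms by auto
  moreover have "(F \<inter> {..<i}) \<inter> (F \<inter> {i<..m}) = {}" by auto
  ultimately show ?thesis
    unfolding partial_norm_def by (simp add: sum.union_disjoint)
qed

lemma head_tail_family_bound:
  assumes J: "in_J x" and famF: "interval_family F I" and famG: "interval_family G L"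
    and i: "i \<in> F" and X: "interval X"
    and head: "\<And>k p q. k \<in> F \<Longrightarrow> k < i \<Longrightarrow> p \<in> I k \<Longrightarrow> q \<in> X \<Longrightarrow> p < q"
    and tail: "\<And>k p q. k \<in> G \<Longrightarrow> j < k \<Longrightarrow> p \<in> X \<Longrightarrow> q \<in> L k \<Longrightarrow> p < q"
  shows "(\<Sum>k\<in>F \<inter> {..<i}. (isum x (I k))\<^sup>2) + (isum x X)\<^sup>2 + (\<Sum>k\<in>G \<inter> {j<..m}. (isum x (L k))\<^sup>2)
    \<le> (jnorm x)\<^sup>2"
proof -
  obtain w where "w \<in> X" using interval_nonempty[OF X] by blast
  have "(\<Sum>k\<in>F \<inter> {..i}. (isum x ((I(i := X)) k))\<^sup>2) + (\<Sum>k\<in>G \<inter> {j<..m}. (isum x (L k))\<^sup>2)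
    \<le> (jnorm x)\<^sup>2"
  proof (rule sum_sq_isum_Plus_le_jnorm[OF J])
    show "\<forall>k\<in>F \<inter> {..i}. interval ((I(i := X)) k)"
      using X interval_family_interval[OF famF] by simp
    show "\<forall>k\<in>G \<inter> {j<..m}. interval (L k)"
      using interval_family_interval[OF famG] by simp
    show "disjoint_family_on (I(i := X)) (F \<inter> {..i})"
    proof (rule disjoint_family_on_fun_upd)
      show "disjoint_family_on I (F \<inter> {..i})"
        by (rule disjoint_family_on_mono[OF _ interval_family_disjoint[OF famF]]) blast
      show "\<forall>k\<in>F \<inter> {..i} - {i}. I k \<inter> X = {}"
      proof (intro ballI disjoint_if_less)
        fix k p q assume "k \<in> F \<inter> {..i} - {i}" "p \<in> I k" "q \<in> X"
        then show "p < q" using head[of k p q] by auto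
      qed
    qed
    show "disjoint_family_on L (G \<inter> {j<..m})"
      by (rule disjoint_family_on_mono[OF _ interval_family_disjoint[OF famG]]) blast
    show "\<forall>k\<in>F \<inter> {..i}. \<forall>k'\<in>G \<inter> {j<..m}. (I(i := X)) k \<inter> L k' = {}"
    proof (intro ballI disjoint_if_less)
      fix k k' p q assume "k \<in> F \<inter> {..i}" "k' \<in> G \<inter> {j<..m}" "p \<in> (I(i := X)) k" "q \<in> L k'"
      then show "p < q"
        using head[of k p w] tail[of k' p q] tail[of k' w q] \<open>w \<in> X\<close> by (cases "k = i") auto
    qed
  qed simp_all
  then show ?thesis using sum_fun_upd_atMost[OF i, of "\<lambda>S. (isum x S)\<^sup>2" I X] by simp
qed

lemma norming_families_bound_nonpos:
  assumes J: "in_J x" and nF: "norming_family x F I" and nG: "norming_family x G L"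
    and bound: "\<And>m. m0 \<le> m \<Longrightarrow> partial_norm x F I m + partial_norm x G L m + c \<le> 2 * (jnorm x)\<^sup>2"
  shows "c \<le> 0"
proof -
  have "partial_norm x F I \<longlonglongrightarrow> (jnorm x)\<^sup>2" "partial_norm x G L \<longlonglongrightarrow> (jnorm x)\<^sup>2"
    using partial_norm_tendsto[OF J norming_familyD(1)[OF nF]] partial_norm_tendsto[OF J norming_familyD(1)[OF nG]]
    by (simp_all add: norming_familyD(2)[OF nF] norming_familyD(2)[OF nG])
  then have "(\<lambda>m. partial_norm x F I m + partial_norm x G L m + c) \<longlonglongrightarrow> (jnorm x)\<^sup>2 + (jnorm x)\<^sup>2 + c"
    by (intro tendsto_add tendsto_const)
  then have "(jnorm x)\<^sup>2 + (jnorm x)\<^sup>2 + c \<le> 2 * (jnorm x)\<^sup>2"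
    using bound by (intro LIMSEQ_le_const2[where X = "\<lambda>m. partial_norm x F I m + partial_norm x G L m + c"]) auto
  then show ?thesis by simp
qed

lemma norming_families_union_inter:
  assumes J: "in_J x" and nF: "norming_family x F I" and nG: "norming_family x G L"
    and i: "i \<in> F" and j: "j \<in> G" and meet: "I i \<inter> L j \<noteq> {}"
    and starts: "\<forall>q\<in>L j. \<exists>p\<in>I i. p \<le> q" and ends: "\<forall>p\<in>I i. \<exists>q\<in>L j. p \<le> q"
  shows "(isum x (I i \<union> L j))\<^sup>2 + (isum x (I i \<inter> L j))\<^sup>2 \<le> (isum x (I i))\<^sup>2 + (isum x (L j))\<^sup>2"
proof -
  have famF: "interval_family F I" and famG: "interval_family G L"
    using nF nG by (simp_all add: norming_familyD)
  have ivI: "interval (I i)" and ivL: "interval (L j)"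
    using interval_family_interval famF famG i j by blast+
  define X Y where "X = I i \<union> L j" and "Y = I i \<inter> L j"
  have X: "interval X" and Y: "interval Y"
    using interval_Un[OF ivI ivL meet] interval_Int[OF ivI ivL meet] by (simp_all add: X_def Y_def)
  have before_X: "p < q" if "k \<in> F" "k < i" "p \<in> I k" "q \<in> X" for k p q
  proof -
    obtain a where "a \<in> I i" "a \<le> q" using \<open>q \<in> X\<close> starts unfolding X_def by blast
    with interval_family_less[OF famF that(1) i that(2) that(3)] show ?thesis
      by (meson less_le_trans)
  qed
  have after_X: "p < q" if "k \<in> G" "j < k" "p \<in> X" "q \<in> L k" for k p q
  proof -
    obtain b where "b \<in> L j" "p \<le> b" using \<open>p \<in> X\<close> ends unfolding X_def by blast
    with interval_family_less[OF famG j that(1) that(2) _ that(4)] show ?thesis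
      by (meson le_less_trans)
  qed
  have before_Y: "q < p" if "k \<in> G" "k < j" "q \<in> L k" "p \<in> Y" for k p q
    using interval_family_less[OF famG that(1) j that(2,3)] that(4) unfolding Y_def by blast
  have after_Y: "p < q" if "k \<in> F" "i < k" "p \<in> Y" "q \<in> I k" for k p q
    using interval_family_less[OF famF i that(1) that(2) _ that(4)] that(3) unfolding Y_def by blast
  let ?c = "(isum x X)\<^sup>2 + (isum x Y)\<^sup>2 - (isum x (I i))\<^sup>2 - (isum x (L j))\<^sup>2"
  have "partial_norm x F I m + partial_norm x G L m + ?c \<le> 2 * (jnorm x)\<^sup>2" if "max i j \<le> m" for m
  proof -
    have "(\<Sum>k\<in>F \<inter> {..<i}. (isum x (I k))\<^sup>2) + (isum x X)\<^sup>2 + (\<Sum>k\<in>G \<inter> {j<..m}. (isum x (L k))\<^sup>2)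
      \<le> (jnorm x)\<^sup>2"
      by (rule head_tail_family_bound[OF J famF famG i X before_X after_X])
    moreover have "(\<Sum>k\<in>G \<inter> {..<j}. (isum x (L k))\<^sup>2) + (isum x Y)\<^sup>2 + (\<Sum>k\<in>F \<inter> {i<..m}. (isum x (I k))\<^sup>2)
      \<le> (jnorm x)\<^sup>2"
      by (rule head_tail_family_bound[OF J famG famF j Y before_Y after_Y])
    ultimately show ?thesis
      using partial_norm_split[OF i, of m x I] partial_norm_split[OF j, of m x L] that by simp
  qed
  then have "?c \<le> 0"
    by (intro norming_families_bound_nonpos[OF J nF nG, of "max i j"]) auto
  then show ?thesis by (simp add: X_def Y_def)
qed

section \<open>Laminarity of two norming families\<close>

lemma crossing_sums_absurd:
  fixes A B C :: real
  assumes "A \<noteq> 0" "B \<noteq> 0" "C \<noteq> 0" "0 \<le> A * B" "0 \<le> C * B"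
    and "(A + B + C)\<^sup>2 + B\<^sup>2 \<le> (A + B)\<^sup>2 + (B + C)\<^sup>2"
  shows False
proof -
  have "A * C \<le> 0" using assms(6) by (simp add: power2_eq_square algebra_simps)
  have "0 < (A * B) * (C * B)" using assms(1-5) by (simp add: order_le_less)
  then have "0 < (A * C) * (B * B)" by (simp add: algebra_simps)
  then have "0 < A * C" by (simp add: zero_less_mult_iff)
  with \<open>A * C \<le> 0\<close> show False by simp
qed

lemma crossing_intervals:
  assumes K: "interval K" and K': "interval K'" and u: "u \<in> K" "u \<notin> K'" and v: "v \<in> K'" "v \<notin> K"
    and "u < v"
  shows "\<forall>q\<in>K. q < v" "\<forall>p\<in>K'. u < p" "interval (K - K')" "interval (K' - K)"
proof -
  show below: "\<forall>q\<in>K. q < v"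
    using interval_between[OF K u(1), of _ v] \<open>u < v\<close> v(2) by (metis not_less order.strict_implies_order)
  show above: "\<forall>p\<in>K'. u < p"
    using interval_between[OF K' _ v(1), of _ u] \<open>u < v\<close> u(2) by (metis not_less order.strict_implies_order)
  have "p < q" if "p \<in> K - K'" "q \<in> K'" for p q
    using interval_between[OF K' that(2) v(1), of p] below that(1) by (cases "p < q") auto
  then show "interval (K - K')" by (intro interval_Diff[OF K]) (use u in blast)+
  have "q < p" if "p \<in> K' - K" "q \<in> K" for p q
    using interval_between[OF K u(1) that(2), of p] above that(1) by (cases "q < p") auto
  then show "interval (K' - K)" by (intro interval_Diff[OF K']) (use v in blast)+
qed

lemma norming_families_no_crossing:
  assumes J: "in_J x" and nF: "norming_family x F I" and nG: "norming_family x G L"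
    and i: "i \<in> F" and j: "j \<in> G"
    and u: "u \<in> I i" "u \<notin> L j" "u \<in> supp x"
    and v: "v \<in> L j" "v \<notin> I i" "v \<in> supp x"
    and w: "w \<in> I i" "w \<in> L j" "w \<in> supp x"
    and "u < v"
  shows False
proof -
  have ivI: "interval (I i)" and ivL: "interval (L j)"
    using interval_family_interval norming_familyD(1) nF nG i j by blast+
  note crossing = crossing_intervals[OF ivI ivL u(1,2) v(1,2) \<open>u < v\<close>]
  define A B C where "A = isum x (I i - L j)" and "B = isum x (I i \<inter> L j)" and "C = isum x (L j - I i)"
  have ivA: "interval (I i - L j)" and ivC: "interval (L j - I i)"
    using crossing(3,4) .
  have ivB: "interval (I i \<inter> L j)"
    by (rule interval_Int[OF ivI ivL]) (use w in blast)
  have "isum x (I i) = A + B"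
    using isum_Un[OF J, of "I i - L j" "I i \<inter> L j"] ivA ivB
    by (simp add: A_def B_def Un_Diff_Int Diff_Int_distrib2 Int_assoc)
  moreover have "isum x (L j) = B + C"
  proof -
    have "L j = (I i \<inter> L j) \<union> (L j - I i)" "(I i \<inter> L j) \<inter> (L j - I i) = {}" by blast+
    then show ?thesis using isum_Un[OF J, of "I i \<inter> L j" "L j - I i"] ivB ivC by (simp add: B_def C_def)
  qed
  moreover have "isum x (I i \<union> L j) = A + B + C"
  proof -
    have "I i \<union> L j = I i \<union> (L j - I i)" by blast
    then show ?thesis
      using isum_Un[OF J, of "I i" "L j - I i"] ivI ivC \<open>isum x (I i) = A + B\<close> by (simp add: C_def)
  qed
  ultimately have "(A + B + C)\<^sup>2 + B\<^sup>2 \<le> (A + B)\<^sup>2 + (B + C)\<^sup>2"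
    using norming_families_union_inter[OF J nF nG i j] u(1) v(1) w(1,2) crossing(1,2)
    by (fastforce simp: B_def intro: less_imp_le)
  moreover have I_split: "I i = (I i - L j) \<union> (I i \<inter> L j)" and L_split: "L j = (L j - I i) \<union> (I i \<inter> L j)"
    by blast+
  moreover have "A \<noteq> 0" unfolding A_def
    by (rule norming_member_piece_nonzero[OF J nF i I_split _ ivA ivB, of u]) (use u in auto)
  moreover have "B \<noteq> 0" unfolding B_def
    by (rule norming_member_piece_nonzero[OF J nF i _ _ ivB ivA, of w]) (use w in auto)
  moreover have "C \<noteq> 0" unfolding C_def
    by (rule norming_member_piece_nonzero[OF J nG j L_split _ ivC ivB, of v]) (use v in auto)
  moreover have "0 \<le> A * B" unfolding A_def B_def
    by (rule norming_member_split[OF J nF i I_split _ ivA ivB]) blast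
  moreover have "0 \<le> C * B" unfolding B_def C_def
    by (rule norming_member_split[OF J nG j L_split _ ivC ivB]) blast
  ultimately show False by (intro crossing_sums_absurd)
qed

lemma norming_families_laminar:
  assumes J: "in_J x" and nF: "norming_family x F I" and nG: "norming_family x G L"
    and i: "i \<in> F" and j: "j \<in> G"
  shows "I i \<inter> L j \<inter> supp x = {} \<or> I i \<inter> supp x \<subseteq> L j \<or> L j \<inter> supp x \<subseteq> I i"
proof (rule ccontr)
  assume "\<not> ?thesis"
  then obtain u v w where u: "u \<in> I i" "u \<notin> L j" "u \<in> supp x"
    and v: "v \<in> L j" "v \<notin> I i" "v \<in> supp x" and w: "w \<in> I i" "w \<in> L j" "w \<in> supp x"
    by blast
  then consider "u < v" | "v < u" by (metis linorder_neqE_nat)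
  then show False
  proof cases
    case 1
    then show False by (rule norming_families_no_crossing[OF J nF nG i j u v w])
  next
    case 2
    then show False by (rule norming_families_no_crossing[OF J nG nF j i v u w(2,1,3)])
  qed
qed

definition supp_cofinal :: "(nat \<Rightarrow> real) \<Rightarrow> nat set \<Rightarrow> bool" where
  "supp_cofinal x K \<longleftrightarrow> (\<forall>n\<in>K. \<exists>s\<in>K \<inter> supp x. n \<le> s)"

lemma supp_cofinal_meets_supp:
  assumes "supp_cofinal x K" "K \<noteq> {}"
  shows "K \<inter> supp x \<noteq> {}"
  using assms unfolding supp_cofinal_def by blast

lemma supp_cofinal_overlap:
  assumes "supp_cofinal x K" "supp_cofinal x K'" "interval K" "interval K'" "n \<in> K" "n \<in> K'"
  shows "K \<inter> K' \<inter> supp x \<noteq> {}"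
proof -
  obtain s s' where s: "s \<in> K \<inter> supp x" "n \<le> s" and s': "s' \<in> K' \<inter> supp x" "n \<le> s'"
    using assms(1,2,5,6) unfolding supp_cofinal_def by blast
  show ?thesis
  proof (cases "s \<le> s'")
    case True
    then have "s \<in> K'" using interval_between[OF assms(4) assms(6)] s s' by blast
    with s show ?thesis by blast
  next
    case False
    then have "s' \<in> K" using interval_between[OF assms(3) assms(5), of s s'] s s' by simp
    with s' show ?thesis by blast
  qed
qed

lemma norming_partitionD:
  assumes "norming_partition x F I"
  shows "norming_family x F I" "interval_family F I"
    and "\<And>i. i \<in> F \<Longrightarrow> enat i < supE F \<Longrightarrow> finite (I i) \<and> Min (I i) \<in> supp x \<and> Max (I i) \<in> supp x"
    and "\<And>i. i \<in> F \<Longrightarrow> \<not> enat i < supE F \<Longrightarrow> Min (I i) \<in> supp x \<and> supE (I i) = supE (supp x)"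
proof -
  show "norming_family x F I" "interval_family F I"
    using assms by (simp_all add: norming_partition_def norming_family_def)
  fix i assume "i \<in> F"
  show "enat i < supE F \<Longrightarrow> finite (I i) \<and> Min (I i) \<in> supp x \<and> Max (I i) \<in> supp x"
    using assms \<open>i \<in> F\<close> by (simp add: norming_partition_def)
  assume last: "\<not> enat i < supE F"
  then have "finite F" by (auto simp: supE_def split: if_splits)
  with last have "i = Max F"
    using Max_ge[OF \<open>finite F\<close> \<open>i \<in> F\<close>] by (simp add: supE_def)
  with \<open>finite F\<close> show "Min (I i) \<in> supp x \<and> supE (I i) = supE (supp x)"
    using assms \<open>i \<in> F\<close> by (simp add: norming_partition_def)
qed

lemma norming_partition_member_cofinal:
  assumes p: "norming_partition x F I" and i: "i \<in> F"
  shows "supp_cofinal x (I i)"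
  unfolding supp_cofinal_def
proof
  fix n assume n: "n \<in> I i"
  have iv: "interval (I i)" using interval_family_interval[OF norming_partitionD(2)[OF p] i] .
  show "\<exists>s\<in>I i \<inter> supp x. n \<le> s"
  proof (cases "enat i < supE F")
    case True
    then show ?thesis using norming_partitionD(3)[OF p i] n Max_in[of "I i"] Max_ge[of "I i" n] by blast
  next
    case False
    note last = norming_partitionD(4)[OF p i False]
    show ?thesis
    proof (cases "finite (I i)")
      case True
      then have "finite (supp x)" "Max (supp x) = Max (I i)"
        using last by (auto simp: supE_def split: if_splits)
      moreover have "supp x \<noteq> {}" using last by blast
      ultimately have "Max (I i) \<in> I i \<inter> supp x"
        using Max_in[OF True] n by (metis IntI Max_in empty_iff)
      with True n show ?thesis by (intro bexI[of _ "Max (I i)"]) auto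
    next
      case False
      then have "infinite (supp x)" using last by (auto simp: supE_def split: if_splits)
      then obtain s where "s \<in> supp x" "n \<le> s" unfolding infinite_nat_iff_unbounded_le by blast
      with interval_infinite_upward[OF iv False n] show ?thesis by blast
    qed
  qed
qed

lemma norming_partition_not_last:
  assumes p: "norming_partition x F I" and i: "i \<in> F" and n: "n \<in> supp x" and below: "\<forall>a\<in>I i. a < n"
  shows "enat i < supE F"
proof (rule ccontr)
  assume "\<not> enat i < supE F"
  then have "I i \<noteq> {}" "supE (I i) = supE (supp x)"
    using interval_nonempty[OF interval_family_interval[OF norming_partitionD(2)[OF p] i]]
      norming_partitionD(4)[OF p i] by auto
  show False
  proof (cases "finite (I i)")
    case True
    then have "finite (supp x)" "Max (I i) = Max (supp x)"
      using \<open>supE (I i) = supE (supp x)\<close> by (auto simp: supE_def split: if_splits)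
    then have "n \<le> Max (I i)" using n by simp
    with below Max_in[OF True \<open>I i \<noteq> {}\<close>] show False by fastforce
  next
    case False
    then obtain a where "a \<in> I i" "n \<le> a" unfolding infinite_nat_iff_unbounded_le by blast
    with below show False by fastforce
  qed
qed

section \<open>The common refinement of two norming partitions\<close>

definition first_supp :: "(nat \<Rightarrow> real) \<Rightarrow> nat set \<Rightarrow> nat" where
  "first_supp x K = (LEAST n. n \<in> K \<inter> supp x)"

definition supp_minimal :: "(nat \<Rightarrow> real) \<Rightarrow> nat set set \<Rightarrow> nat set \<Rightarrow> bool" where
  "supp_minimal x \<K> K \<longleftrightarrow> K \<in> \<K> \<and> (\<forall>K'\<in>\<K>. K \<inter> K' \<inter> supp x \<noteq> {} \<longrightarrow> K \<inter> supp x \<subseteq> K')"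

definition first_points :: "(nat \<Rightarrow> real) \<Rightarrow> nat set set \<Rightarrow> nat set" where
  "first_points x \<K> = first_supp x ` {K. supp_minimal x \<K> K}"

definition minimal_with_first :: "(nat \<Rightarrow> real) \<Rightarrow> nat set set \<Rightarrow> nat \<Rightarrow> nat set" where
  "minimal_with_first x \<K> q = (SOME K. supp_minimal x \<K> K \<and> first_supp x K = q)"

text \<open>The p-th member of the refinement is the support-minimal member whose first support point
  is the p-th smallest one; indices start at 1.\<close>

definition refinement_index :: "(nat \<Rightarrow> real) \<Rightarrow> nat set set \<Rightarrow> nat set" where
  "refinement_index x \<K> =
     (if finite (first_points x \<K>) then {1..card (first_points x \<K>)} else {1..})"

definition refinement :: "(nat \<Rightarrow> real) \<Rightarrow> nat set set \<Rightarrow> nat \<Rightarrow> nat set" where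
  "refinement x \<K> p = minimal_with_first x \<K> (enumerate (first_points x \<K>) (p - 1))"

lemma supp_minimalD:
  assumes "supp_minimal x \<K> K"
  shows "K \<in> \<K>" "K' \<in> \<K> \<Longrightarrow> K \<inter> K' \<inter> supp x \<noteq> {} \<Longrightarrow> K \<inter> supp x \<subseteq> K'"
  using assms unfolding supp_minimal_def by blast+

lemma first_supp_cong: "K \<inter> supp x = K' \<inter> supp x \<Longrightarrow> first_supp x K = first_supp x K'"
  unfolding first_supp_def by simp

lemma first_supp_mem: "K \<inter> supp x \<noteq> {} \<Longrightarrow> first_supp x K \<in> K \<inter> supp x"
  unfolding first_supp_def by (metis LeastI ex_in_conv)

locale two_norming_partitions =
  fixes x :: "nat \<Rightarrow> real" and F G :: "nat set" and I L :: "nat \<Rightarrow> nat set"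
  assumes J: "in_J x" and pF: "norming_partition x F I" and pG: "norming_partition x G L"
begin

abbreviation members :: "nat set set" where
  "members \<equiv> I ` F \<union> L ` G"

abbreviation minimal :: "nat set \<Rightarrow> bool" where
  "minimal \<equiv> supp_minimal x members"

abbreviation Q :: "nat set" where
  "Q \<equiv> first_points x members"

abbreviation M :: "nat \<Rightarrow> nat set" where
  "M \<equiv> minimal_with_first x members"

lemma swap: "two_norming_partitions x G F L I"
  using J pF pG by (simp add: two_norming_partitions_def)

lemma members_swap: "L ` G \<union> I ` F = members"
  by blast

lemma member_interval: "K \<in> members \<Longrightarrow> interval K"
  using interval_family_interval[OF norming_partitionD(2)[OF pF]]
    interval_family_interval[OF norming_partitionD(2)[OF pG]] by blast

lemma member_cofinal: "K \<in> members \<Longrightarrow> supp_cofinal x K"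
  using norming_partition_member_cofinal[OF pF] norming_partition_member_cofinal[OF pG] by blast

lemma member_meets_supp: "K \<in> members \<Longrightarrow> K \<inter> supp x \<noteq> {}"
  by (rule supp_cofinal_meets_supp[OF member_cofinal interval_nonempty[OF member_interval]])

lemma members_overlap: "K \<in> members \<Longrightarrow> K' \<in> members \<Longrightarrow> n \<in> K \<Longrightarrow> n \<in> K' \<Longrightarrow> K \<inter> K' \<inter> supp x \<noteq> {}"
  by (rule supp_cofinal_overlap[OF member_cofinal member_cofinal member_interval member_interval])

lemma same_family_eq:
  "i \<in> F \<Longrightarrow> i' \<in> F \<Longrightarrow> I i \<inter> I i' \<noteq> {} \<Longrightarrow> i = i'"
  "j \<in> G \<Longrightarrow> j' \<in> G \<Longrightarrow> L j \<inter> L j' \<noteq> {} \<Longrightarrow> j = j'"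
  using interval_family_disjoint[OF norming_partitionD(2)[OF pF]]
    interval_family_disjoint[OF norming_partitionD(2)[OF pG]]
  by (auto dest: disjoint_family_onD)

lemma minimal_if_inside_other:
  assumes i: "i \<in> F" and j: "j \<in> G" and inside: "I i \<inter> supp x \<subseteq> L j"
  shows "minimal (I i)"
  unfolding supp_minimal_def
proof (intro conjI ballI impI)
  show "I i \<in> members" using i by blast
  fix K assume "K \<in> members" and meet: "I i \<inter> K \<inter> supp x \<noteq> {}"
  then consider i' where "i' \<in> F" "K = I i'" | j' where "j' \<in> G" "K = L j'" by blast
  then show "I i \<inter> supp x \<subseteq> K"
  proof cases
    case 1
    with meet same_family_eq(1)[OF i \<open>i' \<in> F\<close>] show ?thesis by blast
  next
    case 2
    with meet inside have "L j \<inter> L j' \<noteq> {}" by blast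
    with same_family_eq(2)[OF j \<open>j' \<in> G\<close>] 2 inside show ?thesis by blast
  qed
qed

lemma exists_minimal:
  assumes n: "n \<in> supp x"
  shows "\<exists>K. minimal K \<and> n \<in> K"
proof -
  obtain i j where i: "i \<in> F" "n \<in> I i" and j: "j \<in> G" "n \<in> L j"
    using norming_family_covers_supp[OF J norming_partitionD(1)[OF pF] n]
      norming_family_covers_supp[OF J norming_partitionD(1)[OF pG] n] by blast
  consider "I i \<inter> supp x \<subseteq> L j" | "L j \<inter> supp x \<subseteq> I i"
    using norming_families_laminar[OF J norming_partitionD(1)[OF pF] norming_partitionD(1)[OF pG] i(1) j(1)]
      i j n by blast
  then show ?thesis
  proof cases
    case 1
    with minimal_if_inside_other[OF i(1) j(1)] i show ?thesis by blast
  next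
    case 2
    with two_norming_partitions.minimal_if_inside_other[OF swap j(1) i(1)] j show ?thesis
      by (auto simp: members_swap)
  qed
qed

lemma minimal_member: "minimal K \<Longrightarrow> K \<in> members"
  by (rule supp_minimalD(1))

lemma minimal_overlap_eq:
  assumes "minimal K" "minimal K'" "K \<inter> K' \<inter> supp x \<noteq> {}"
  shows "K \<inter> supp x = K' \<inter> supp x"
proof -
  have "K \<inter> supp x \<subseteq> K'" "K' \<inter> supp x \<subseteq> K"
    using supp_minimalD(2)[OF assms(1) supp_minimalD(1)[OF assms(2)]]
      supp_minimalD(2)[OF assms(2) supp_minimalD(1)[OF assms(1)]] assms(3) by (auto simp: Int_commute)
  then show ?thesis by blast
qed

lemma minimal_disjoint:
  assumes "minimal K" "minimal K'" "K \<inter> supp x \<noteq> K' \<inter> supp x"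
  shows "K \<inter> K' = {}"
  using members_overlap[OF minimal_member[OF assms(1)] minimal_member[OF assms(2)]]
    minimal_overlap_eq[OF assms(1,2)] assms(3) by blast

lemma first_supp_minimal: "minimal K \<Longrightarrow> first_supp x K \<in> K \<inter> supp x"
  by (rule first_supp_mem[OF member_meets_supp[OF minimal_member]])

lemma first_point_supp: "q \<in> Q \<Longrightarrow> q \<in> supp x"
  unfolding first_points_def using first_supp_minimal by auto

lemma minimal_with_first:
  assumes "q \<in> Q"
  shows "minimal (M q)" "first_supp x (M q) = q"
proof -
  have "\<exists>K. minimal K \<and> first_supp x K = q" using assms unfolding first_points_def by blast
  then have "minimal (M q) \<and> first_supp x (M q) = q"
    unfolding minimal_with_first_def by (rule someI_ex)
  then show "minimal (M q)" "first_supp x (M q) = q" by auto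
qed

lemma first_point_mem: "q \<in> Q \<Longrightarrow> q \<in> M q"
  using first_supp_minimal minimal_with_first by fastforce

lemma minimal_eq_M:
  assumes "q \<in> Q" "minimal K" "q \<in> K"
  shows "K \<inter> supp x = M q \<inter> supp x"
  using minimal_overlap_eq[OF assms(2) minimal_with_first(1)[OF assms(1)]]
    assms(3) first_point_mem[OF assms(1)] first_point_supp[OF assms(1)] by blast

lemma M_less:
  assumes "q \<in> Q" "q' \<in> Q" "q < q'" "a \<in> M q" "b \<in> M q'"
  shows "a < b"
proof (rule intervals_disjoint_less[OF _ _ _ first_point_mem[OF assms(1)] first_point_mem[OF assms(2)] assms(3-5)])
  show "interval (M q)" "interval (M q')"
    using member_interval[OF minimal_member[OF minimal_with_first(1)]] assms(1,2) by blast+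
  have "M q \<inter> supp x \<noteq> M q' \<inter> supp x"
    using first_supp_cong minimal_with_first(2) assms(1-3) by (metis less_irrefl)
  then show "M q \<inter> M q' = {}"
    by (rule minimal_disjoint[OF minimal_with_first(1)[OF assms(1)] minimal_with_first(1)[OF assms(2)]])
qed

abbreviation H :: "nat set" where
  "H \<equiv> refinement_index x members"

abbreviation N :: "nat \<Rightarrow> nat set" where
  "N \<equiv> refinement x members"

abbreviation pos :: "nat \<Rightarrow> nat" where
  "pos p \<equiv> enumerate Q (p - 1)"

lemma H_cases: "(\<exists>k. H = {1..k}) \<or> H = {1..}"
  unfolding refinement_index_def by auto

lemma pos_in_Q: "p \<in> H \<Longrightarrow> pos p \<in> Q"
  unfolding refinement_index_def
  by (cases "finite Q") (auto intro: finite_enumerate_in_set enumerate_in_set)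

lemma pos_less:
  assumes "p \<in> H" "p' \<in> H" "p < p'"
  shows "pos p < pos p'"
proof -
  have "p - 1 < p' - 1" using assms H_cases by auto
  then show ?thesis
    using assms(2) unfolding refinement_index_def
    by (cases "finite Q") (auto intro: finite_enumerate_mono enumerate_mono)
qed

lemma pos_le: "p \<in> H \<Longrightarrow> p' \<in> H \<Longrightarrow> p \<le> p' \<Longrightarrow> pos p \<le> pos p'"
  using pos_less by (cases "p = p'") (auto intro: less_imp_le)

lemma pos_surj:
  assumes "q \<in> Q"
  shows "\<exists>p\<in>H. pos p = q"
proof (cases "finite Q")
  case True
  then obtain n where "n < card Q" "enumerate Q n = q" using finite_enumerate_Ex assms by blast
  with True show ?thesis by (intro bexI[of _ "Suc n"]) (auto simp: refinement_index_def)
next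
  case False
  then obtain n where "enumerate Q n = q" using enumerate_Ex assms by blast
  with False show ?thesis by (intro bexI[of _ "Suc n"]) (auto simp: refinement_index_def)
qed

lemma pos_inj: "p \<in> H \<Longrightarrow> p' \<in> H \<Longrightarrow> pos p = pos p' \<Longrightarrow> p = p'"
  using pos_less by (metis less_irrefl nat_neq_iff)

lemma N_minimal: "p \<in> H \<Longrightarrow> minimal (N p)"
  unfolding refinement_def by (rule minimal_with_first(1)[OF pos_in_Q])

lemma N_member: "p \<in> H \<Longrightarrow> N p \<in> members"
  by (rule minimal_member[OF N_minimal])

lemma pos_mem_N: "p \<in> H \<Longrightarrow> pos p \<in> N p"
  unfolding refinement_def by (rule first_point_mem[OF pos_in_Q])

lemma N_less: "p \<in> H \<Longrightarrow> p' \<in> H \<Longrightarrow> p < p' \<Longrightarrow> a \<in> N p \<Longrightarrow> b \<in> N p' \<Longrightarrow> a < b"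
  unfolding refinement_def by (rule M_less[OF pos_in_Q pos_in_Q pos_less])

lemma interval_family_N: "interval_family H N"
  unfolding interval_family_def
  using H_cases member_interval[OF N_member] N_less[of _ "Suc _"] by blast

lemma N_cover:
  assumes "n \<in> supp x"
  shows "\<exists>p\<in>H. n \<in> N p"
proof -
  obtain K where K: "minimal K" "n \<in> K" using exists_minimal[OF assms] by blast
  then have q: "first_supp x K \<in> Q" unfolding first_points_def by blast
  then obtain p where p: "p \<in> H" "pos p = first_supp x K" using pos_surj by blast
  have "K \<inter> supp x = N p \<inter> supp x"
    unfolding refinement_def p(2) using minimal_eq_M[OF q K(1)] first_supp_minimal[OF K(1)] by blast
  with K(2) assms p(1) show ?thesis by blast
qed

lemma N_inside:
  assumes "p \<in> H" "K \<in> members" "n \<in> N p" "n \<in> K" "n \<in> supp x"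
  shows "N p \<inter> supp x \<subseteq> K"
  using supp_minimalD(2)[OF N_minimal[OF assms(1)] assms(2)] assms(3-5) by blast

lemma N_not_last:
  assumes p': "norming_partition x F' I'" and i: "i \<in> F'" and p: "p \<in> H" and eq: "N p = I' i"
    and not_last: "enat p < supE H"
  shows "finite (N p) \<and> Min (N p) \<in> supp x \<and> Max (N p) \<in> supp x"
proof -
  have "Suc p \<in> H" by (rule interval_family_Suc[OF interval_family_N p not_last])
  have "pos (Suc p) \<in> supp x" by (rule first_point_supp[OF pos_in_Q[OF \<open>Suc p \<in> H\<close>]])
  moreover have "\<forall>a\<in>I' i. a < pos (Suc p)"
    using N_less[OF p \<open>Suc p \<in> H\<close> lessI _ pos_mem_N[OF \<open>Suc p \<in> H\<close>]] eq by blast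
  ultimately have "enat i < supE F'" by (rule norming_partition_not_last[OF p' i])
  with norming_partitionD(3)[OF p' i] eq show ?thesis by simp
qed

lemma N_last:
  assumes p': "norming_partition x F' I'" and i: "i \<in> F'" and p: "p \<in> H" and eq: "N p = I' i"
    and last: "finite H" "p = Max H"
  shows "Min (N p) \<in> supp x \<and> supE (N p) = supE (supp x)"
proof -
  have "\<not> enat i < supE F'"
  proof
    assume "enat i < supE F'"
    then have "Suc i \<in> F'" by (rule interval_family_Suc[OF norming_partitionD(2)[OF p'] i])
    then obtain n where n: "n \<in> I' (Suc i)" "n \<in> supp x"
      using supp_cofinal_meets_supp[OF norming_partition_member_cofinal[OF p']]
        interval_nonempty[OF interval_family_interval[OF norming_partitionD(2)[OF p']]] by blast
    have after: "a < n" if "a \<in> I' i" for a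
      using interval_family_less[OF norming_partitionD(2)[OF p'] i \<open>Suc i \<in> F'\<close> _ that n(1)] by simp
    obtain p'' where p'': "p'' \<in> H" "n \<in> N p''" using N_cover[OF n(2)] by blast
    have "p'' \<le> p" using Max_ge[OF last(1) p''(1)] last(2) by simp
    then show False
    proof (cases "p'' = p")
      case True
      with p''(2) eq after show False by blast
    next
      case False
      with \<open>p'' \<le> p\<close> have "n < pos p" using N_less[OF p''(1) p _ p''(2) pos_mem_N[OF p]] by simp
      moreover have "pos p < n" using after pos_mem_N[OF p] eq by simp
      ultimately show False by simp
    qed
  qed
  with norming_partitionD(4)[OF p' i] eq show ?thesis by simp
qed

lemma member_eq_Union_N:
  assumes K: "K \<in> members"
  shows "\<exists>Hk. interval Hk \<and> Hk \<subseteq> H \<and> K \<inter> supp x = (\<Union>p\<in>Hk. N p \<inter> supp x)"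
proof -
  define Hk where "Hk = {p \<in> H. N p \<inter> supp x \<subseteq> K}"
  have covered: "\<exists>p\<in>Hk. n \<in> N p" if n: "n \<in> K" "n \<in> supp x" for n
  proof -
    obtain p where "p \<in> H" "n \<in> N p" using N_cover[OF n(2)] by blast
    with N_inside[OF _ K] n show ?thesis unfolding Hk_def by blast
  qed
  have pos_in_K: "pos p \<in> K" if "p \<in> Hk" for p
    using that pos_mem_N first_point_supp[OF pos_in_Q] unfolding Hk_def by blast
  have "interval Hk"
  proof (rule intervalI)
    show "Hk \<noteq> {}" using member_meets_supp[OF K] covered by blast
    show "Hk \<subseteq> {1..}" using H_cases unfolding Hk_def by auto
    fix a b c assume abc: "a \<in> Hk" "c \<in> Hk" "a \<le> b" "b \<le> c"
    then have "a \<in> H" "c \<in> H" unfolding Hk_def by auto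
    then have "b \<in> H" using interval_family_index_between[OF interval_family_N] abc(3,4) by blast
    then have "pos b \<in> K"
      using interval_between[OF member_interval[OF K] pos_in_K[OF abc(1)] pos_in_K[OF abc(2)]]
        pos_le[OF \<open>a \<in> H\<close> \<open>b \<in> H\<close> abc(3)] pos_le[OF \<open>b \<in> H\<close> \<open>c \<in> H\<close> abc(4)] by blast
    then have "N b \<inter> supp x \<subseteq> K"
      using N_inside[OF \<open>b \<in> H\<close> K pos_mem_N[OF \<open>b \<in> H\<close>]] first_point_supp[OF pos_in_Q[OF \<open>b \<in> H\<close>]]
      by blast
    with \<open>b \<in> H\<close> show "b \<in> Hk" unfolding Hk_def by blast
  qed
  moreover have "K \<inter> supp x = (\<Union>p\<in>Hk. N p \<inter> supp x)"
    using covered unfolding Hk_def by blast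
  ultimately show ?thesis unfolding Hk_def by blast
qed

abbreviation inner :: "nat \<Rightarrow> nat set" where
  "inner k \<equiv> {j \<in> G. L j \<inter> supp x \<subseteq> I k}"

lemma inner_minimal: "j \<in> inner k \<Longrightarrow> k \<in> F \<Longrightarrow> minimal (L j)"
  using two_norming_partitions.minimal_if_inside_other[OF swap, of j k] by (simp add: members_swap)

lemma first_supp_L_mem: "j \<in> G \<Longrightarrow> first_supp x (L j) \<in> L j \<inter> supp x"
  by (rule first_supp_mem[OF member_meets_supp]) blast

lemma first_supp_L_inj: "inj_on (\<lambda>j. first_supp x (L j)) G"
proof (rule inj_onI)
  fix j j' assume j: "j \<in> G" "j' \<in> G" and eq: "first_supp x (L j) = first_supp x (L j')"
  have "first_supp x (L j) \<in> L j \<inter> L j'"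
    using first_supp_L_mem[OF j(1)] first_supp_L_mem[OF j(2)] eq by simp
  then show "j = j'" using same_family_eq(2)[OF j] by blast
qed

lemma member_pieces_finite:
  assumes side: "finite G \<or> infinite F" and k: "k \<in> F"
  shows "finite (Q \<inter> I k)" "finite (inner k)"
proof -
  have finite_Ik: "finite (I k)" if "infinite F"
    using norming_partitionD(3)[OF pF k] that by (simp add: supE_def)
  show "finite (Q \<inter> I k)"
  proof (cases "finite (I k)")
    case False
    with finite_Ik side have "finite F" "finite G" by auto
    then have "finite (first_supp x ` members)" by simp
    moreover have "Q \<subseteq> first_supp x ` members"
      unfolding first_points_def using minimal_member by (intro image_mono) blast
    ultimately have "finite Q" by (rule finite_subset[rotated])
    then show ?thesis by simp
  qed simp
  show "finite (inner k)"
  proof (cases "finite G")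
    case False
    with finite_Ik side have "finite (I k)" by auto
    moreover have "(\<lambda>j. first_supp x (L j)) ` inner k \<subseteq> I k"
      using first_supp_L_mem by blast
    ultimately have "finite ((\<lambda>j. first_supp x (L j)) ` inner k)"
      by (rule finite_subset[rotated])
    then show ?thesis
      by (rule finite_imageD[OF _ inj_on_subset[OF first_supp_L_inj]]) blast
  qed simp
qed

lemma sq_isum_minimal_member:
  assumes k: "k \<in> F" and min: "minimal (I k)"
  shows "(isum x (I k))\<^sup>2 = (\<Sum>q\<in>Q \<inter> I k. (isum x (M q))\<^sup>2)"
proof -
  let ?q = "first_supp x (I k)"
  have q: "?q \<in> Q" "?q \<in> I k"
    using first_supp_minimal[OF min] min unfolding first_points_def by auto
  have "Q \<inter> I k = {?q}"
  proof (intro equalityI subsetI)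
    fix q assume "q \<in> Q \<inter> I k"
    then have "first_supp x (I k) = first_supp x (M q)"
      using minimal_eq_M[OF _ min] by (intro first_supp_cong) blast
    with \<open>q \<in> Q \<inter> I k\<close> show "q \<in> {?q}" using minimal_with_first(2) by simp
  qed (use q in blast)
  moreover have "isum x (M ?q) = isum x (I k)"
    using minimal_eq_M[OF q(1) min q(2)]
      interval_subset_atLeast1[OF member_interval[OF minimal_member[OF minimal_with_first(1)[OF q(1)]]]]
      interval_subset_atLeast1[OF member_interval[OF minimal_member[OF min]]]
    by (intro isum_cong_supp) auto
  ultimately show ?thesis by simp
qed

lemma sq_isum_nonminimal_member:
  assumes k: "k \<in> F" and not_min: "\<not> minimal (I k)" and fin: "finite (inner k)"
  shows "(isum x (I k))\<^sup>2 \<le> (\<Sum>j\<in>inner k. (isum x (L j))\<^sup>2)"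
proof -
  have laminar: "I k \<inter> L j \<inter> supp x = {} \<or> I k \<inter> supp x \<subseteq> L j \<or> L j \<inter> supp x \<subseteq> I k" if "j \<in> G" for j
    by (rule norming_families_laminar[OF J norming_partitionD(1)[OF pF] norming_partitionD(1)[OF pG] k that])
  obtain K where K: "K \<in> members" "I k \<inter> K \<inter> supp x \<noteq> {}" "\<not> I k \<inter> supp x \<subseteq> K"
    using not_min k unfolding supp_minimal_def by blast
  then obtain j0 where j0: "j0 \<in> G" "K = L j0"
    using same_family_eq(1)[OF k] by blast
  with K laminar have "j0 \<in> inner k" by blast
  have "L j \<inter> I k = {}" if j: "j \<in> G - inner k" for j
  proof (rule ccontr)
    assume "L j \<inter> I k \<noteq> {}"
    then have "I k \<inter> L j \<inter> supp x \<noteq> {}"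
      using members_overlap[of "I k" "L j"] k j by blast
    with laminar[of j] j have "I k \<inter> supp x \<subseteq> L j" by blast
    moreover have "L j0 \<inter> supp x \<noteq> {}" using member_meets_supp j0(1) by blast
    ultimately have "L j0 \<inter> L j \<noteq> {}" using \<open>j0 \<in> inner k\<close> by blast
    with same_family_eq(2)[OF j0(1)] j \<open>j0 \<in> inner k\<close> show False by blast
  qed
  then have "(\<Sum>s\<in>{k}. (isum x (I s))\<^sup>2) \<le> (\<Sum>j\<in>inner k. (isum x (L j))\<^sup>2)"
    using k interval_family_interval[OF norming_partitionD(2)[OF pF]]
    by (intro norming_family_exchange[OF J norming_partitionD(1)[OF pG] fin])
      (auto simp: disjoint_family_on_def)
  then show ?thesis by simp
qed

lemma inner_le_first_points:
  assumes k: "k \<in> F" and fin: "finite (Q \<inter> I k)"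
  shows "(\<Sum>j\<in>inner k. (isum x (L j))\<^sup>2) \<le> (\<Sum>q\<in>Q \<inter> I k. (isum x (M q))\<^sup>2)"
proof -
  let ?\<phi> = "\<lambda>j. first_supp x (L j)"
  have \<phi>: "?\<phi> j \<in> Q \<inter> I k" if j: "j \<in> inner k" for j
  proof -
    have "?\<phi> j \<in> Q"
      unfolding first_points_def by (rule rev_image_eqI[of "L j"]) (use inner_minimal[OF j k] in auto)
    moreover have "?\<phi> j \<in> I k" using first_supp_L_mem j by blast
    ultimately show ?thesis by blast
  qed
  have "inj_on ?\<phi> (inner k)"
    by (rule inj_on_subset[OF first_supp_L_inj]) blast
  have eq: "isum x (L j) = isum x (M (?\<phi> j))" if j: "j \<in> inner k" for j
  proof (rule isum_cong_supp)
    show "L j \<subseteq> {1..}"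
      by (rule interval_subset_atLeast1[OF member_interval]) (use j in blast)
    show "M (?\<phi> j) \<subseteq> {1..}"
      by (rule interval_subset_atLeast1[OF member_interval[OF minimal_member[OF minimal_with_first(1)]]])
        (use \<phi>[OF j] in blast)
    show "L j \<inter> supp x = M (?\<phi> j) \<inter> supp x"
      by (rule minimal_eq_M[OF _ inner_minimal[OF j k]]) (use \<phi>[OF j] first_supp_L_mem j in blast)+
  qed
  have "(\<Sum>j\<in>inner k. (isum x (L j))\<^sup>2) = (\<Sum>j\<in>inner k. (isum x (M (?\<phi> j)))\<^sup>2)"
    by (rule sum.cong[OF refl]) (simp only: eq)
  also have "\<dots> = (\<Sum>q\<in>?\<phi> ` inner k. (isum x (M q))\<^sup>2)"
    by (simp add: sum.reindex[OF \<open>inj_on ?\<phi> (inner k)\<close>])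
  also have "\<dots> \<le> (\<Sum>q\<in>Q \<inter> I k. (isum x (M q))\<^sup>2)"
    using \<phi> by (intro sum_mono2[OF fin]) auto
  finally show ?thesis .
qed

lemma sq_isum_le_first_points:
  assumes side: "finite G \<or> infinite F" and k: "k \<in> F"
  shows "(isum x (I k))\<^sup>2 \<le> (\<Sum>q\<in>Q \<inter> I k. (isum x (M q))\<^sup>2)"
proof (cases "minimal (I k)")
  case True
  then show ?thesis using sq_isum_minimal_member[OF k] by simp
next
  case False
  with sq_isum_nonminimal_member[OF k] inner_le_first_points[OF k] member_pieces_finite[OF side k]
  show ?thesis by (meson order_trans)
qed

lemma sum_M_le_partial_norm:
  assumes "finite Q'" "Q' \<subseteq> Q"
  shows "\<exists>m'. (\<Sum>q\<in>Q'. (isum x (M q))\<^sup>2) \<le> partial_norm x H N m'"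
proof -
  define P where "P = {p \<in> H. pos p \<in> Q'}"
  have "inj_on pos P" using pos_inj unfolding P_def by (intro inj_onI) blast
  have "pos ` P = Q'"
  proof
    show "pos ` P \<subseteq> Q'" unfolding P_def by blast
    show "Q' \<subseteq> pos ` P"
    proof
      fix q assume "q \<in> Q'"
      then obtain p where "p \<in> H" "pos p = q" using pos_surj assms(2) by blast
      with \<open>q \<in> Q'\<close> show "q \<in> pos ` P" unfolding P_def by blast
    qed
  qed
  with assms(1) \<open>inj_on pos P\<close> have "finite P" by (metis finite_imageD)
  have "(\<Sum>q\<in>Q'. (isum x (M q))\<^sup>2) = (\<Sum>p\<in>P. (isum x (N p))\<^sup>2)"
    using sum.reindex[OF \<open>inj_on pos P\<close>, of "\<lambda>q. (isum x (M q))\<^sup>2"] \<open>pos ` P = Q'\<close>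
    by (simp add: refinement_def)
  also have "\<dots> \<le> partial_norm x H N (Max (insert 0 P))"
  proof -
    have "P \<subseteq> H" unfolding P_def by blast
    with \<open>finite P\<close> have "P \<subseteq> H \<inter> {..Max (insert 0 P)}" by (auto intro: Max_ge)
    then show ?thesis
      unfolding partial_norm_def by (intro sum_mono2) auto
  qed
  finally show ?thesis by blast
qed

lemma partial_norm_le_refinement:
  assumes side: "finite G \<or> infinite F"
  shows "\<exists>m'. partial_norm x F I m \<le> partial_norm x H N m'"
proof -
  let ?Q' = "\<Union>k\<in>F \<inter> {..m}. Q \<inter> I k"
  have fin: "finite (Q \<inter> I k)" if "k \<in> F \<inter> {..m}" for k
    using member_pieces_finite(1)[OF side] that by blast
  have "partial_norm x F I m \<le> (\<Sum>k\<in>F \<inter> {..m}. \<Sum>q\<in>Q \<inter> I k. (isum x (M q))\<^sup>2)"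
    unfolding partial_norm_def using sq_isum_le_first_points[OF side] by (intro sum_mono) blast
  also have "\<dots> = (\<Sum>q\<in>?Q'. (isum x (M q))\<^sup>2)"
  proof (rule sum.UNION_disjoint[symmetric])
    show "\<forall>k\<in>F \<inter> {..m}. \<forall>k'\<in>F \<inter> {..m}. k \<noteq> k' \<longrightarrow> (Q \<inter> I k) \<inter> (Q \<inter> I k') = {}"
      using interval_family_disjoint[OF norming_partitionD(2)[OF pF]] by (auto dest: disjoint_family_onD)
  qed (use fin in auto)
  finally show ?thesis
    using sum_M_le_partial_norm[of ?Q'] fin order_trans by blast
qed

lemma norming_family_refinement: "norming_family x H N"
  \<comment> \<open>If F is finite and G infinite, the last member of F may contain infinitely many members
    of G; then N is compared with G instead of F.\<close>
proof (cases "finite G \<or> infinite F")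
  case True
  then show ?thesis
    using norming_familyI_dominating[OF J interval_family_N norming_partitionD(1)[OF pF]]
      partial_norm_le_refinement by blast
next
  case False
  then have "\<forall>m. \<exists>m'. partial_norm x G L m \<le> partial_norm x H N m'"
    using two_norming_partitions.partial_norm_le_refinement[OF swap] by (simp add: members_swap)
  then show ?thesis
    using norming_familyI_dominating[OF J interval_family_N norming_partitionD(1)[OF pG]] by blast
qed

lemma norming_partition_refinement: "norming_partition x H N"
  unfolding norming_partition_def
proof (intro conjI ballI impI norming_family_refinement)
  fix p assume p: "p \<in> H" and "enat p < supE H"
  then have "finite (N p) \<and> Min (N p) \<in> supp x \<and> Max (N p) \<in> supp x"
    using N_member[OF p] N_not_last[OF pF _ p] N_not_last[OF pG _ p] by blast
  then show "finite (N p)" "Min (N p) \<in> supp x" "Max (N p) \<in> supp x" by auto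
next
  fix p assume "finite H" "p \<in> H" "p = Max H"
  then have "Min (N p) \<in> supp x \<and> supE (N p) = supE (supp x)"
    using N_member[of p] N_last[OF pF _ \<open>p \<in> H\<close>] N_last[OF pG _ \<open>p \<in> H\<close>] by blast
  then show "Min (N p) \<in> supp x" "supE (N p) = supE (supp x)" by auto
qed

end

theorem corollary3p10:
  fixes x :: "nat \<Rightarrow> real" and F G :: "nat set" and I L :: "nat \<Rightarrow> nat set"
  assumes "in_J x"
    and "norming_partition x F I"
    and "norming_partition x G L"
  shows "\<exists>H N. norming_partition x H N \<and>
     (\<forall>p\<in>H. (\<exists>i\<in>F. N p = I i) \<or> (\<exists>j\<in>G. N p = L j)) \<and>
     (\<forall>i\<in>F. \<exists>Hi. interval Hi \<and> Hi \<subseteq> H \<and> I i \<inter> supp x = (\<Union>p\<in>Hi. N p \<inter> supp x)) \<and>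
     (\<forall>j\<in>G. \<exists>Hj. interval Hj \<and> Hj \<subseteq> H \<and> L j \<inter> supp x = (\<Union>p\<in>Hj. N p \<inter> supp x))"
proof -
  interpret two_norming_partitions x F G I L
    using assms by unfold_locales
  have "\<forall>p\<in>H. (\<exists>i\<in>F. N p = I i) \<or> (\<exists>j\<in>G. N p = L j)"
    using N_member by blast
  moreover have "\<forall>i\<in>F. \<exists>Hi. interval Hi \<and> Hi \<subseteq> H \<and> I i \<inter> supp x = (\<Union>p\<in>Hi. N p \<inter> supp x)"
    using member_eq_Union_N by blast
  moreover have "\<forall>j\<in>G. \<exists>Hj. interval Hj \<and> Hj \<subseteq> H \<and> L j \<inter> supp x = (\<Union>p\<in>Hj. N p \<inter> supp x)"
    using member_eq_Union_N by blast
  ultimately show ?thesis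
    using norming_partition_refinement by blast
qed

end
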